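(* For each $n\in\mathbb{N}$, $\mathrm{WR}(\Sigma_n\wedge\Pi_n)\vdash\mathrm{I}\Sigma_{n+1}$.
   Context: All theories contain $\mathrm{PA}^-$. $\Sigma_n\wedge\Pi_n$ is the class of formulas that are a conjunction of a $\Sigma_n$ and a $\Pi_n$ formula. For a formula $\phi(x,y)$ (possibly with further free variables), $\mathrm{WR}\phi$ is the universal closure of $\forall x\,\exists y<a\,\phi(x,y)\to\exists y<a\,\forall b\,\exists x>b\,\phi(x,y)$, and $\mathrm{WR}\Gamma=\mathrm{I}\Delta_0\cup\{\mathrm{WR}\phi:\phi\in\Gamma\}$. $\mathrm{I}\Sigma_k$ is the $\Sigma_k$-induction scheme. *)

theory Defs
  imports Main
begin

text \<open>Terms and formulas use de Bruijn indices. Bounded quantifiers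
  BEx t phi / BAll t phi stand for (exists x<t. phi) / (forall x<t. phi),
  where t is interpreted in the outer environment (so x does not occur in t)
  and phi in the environment extended by x (index 0).\<close>

datatype trm = Var nat | Zero | One | Plus trm trm | Times trm trm

datatype fm =
    Eq trm trm | Lt trm trm
  | Neg fm | Conj fm fm | Disj fm fm | Imp fm fm
  | Ex fm | All fm
  | BEx trm fm | BAll trm fm

record 'a str =
  zer :: 'a
  one :: 'a
  pls :: "'a \<Rightarrow> 'a \<Rightarrow> 'a"
  tms :: "'a \<Rightarrow> 'a \<Rightarrow> 'a"
  lss :: "'a \<Rightarrow> 'a \<Rightarrow> bool"

fun evt :: "'a str \<Rightarrow> (nat \<Rightarrow> 'a) \<Rightarrow> trm \<Rightarrow> 'a" where
  "evt M e (Var i) = e i"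
| "evt M e Zero = zer M"
| "evt M e One = one M"
| "evt M e (Plus s t) = pls M (evt M e s) (evt M e t)"
| "evt M e (Times s t) = tms M (evt M e s) (evt M e t)"

fun sat :: "'a str \<Rightarrow> (nat \<Rightarrow> 'a) \<Rightarrow> fm \<Rightarrow> bool" where
  "sat M e (Eq s t) = (evt M e s = evt M e t)"
| "sat M e (Lt s t) = lss M (evt M e s) (evt M e t)"
| "sat M e (Neg p) = (\<not> sat M e p)"
| "sat M e (Conj p q) = (sat M e p \<and> sat M e q)"
| "sat M e (Disj p q) = (sat M e p \<or> sat M e q)"
| "sat M e (Imp p q) = (sat M e p \<longrightarrow> sat M e q)"
| "sat M e (Ex p) = (\<exists>a. sat M (case_nat a e) p)"
| "sat M e (All p) = (\<forall>a. sat M (case_nat a e) p)"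
| "sat M e (BEx t p) = (\<exists>a. lss M a (evt M e t) \<and> sat M (case_nat a e) p)"
| "sat M e (BAll t p) = (\<forall>a. lss M a (evt M e t) \<longrightarrow> sat M (case_nat a e) p)"

inductive delta0 :: "fm \<Rightarrow> bool" where
  "delta0 (Eq s t)"
| "delta0 (Lt s t)"
| "delta0 p \<Longrightarrow> delta0 (Neg p)"
| "delta0 p \<Longrightarrow> delta0 q \<Longrightarrow> delta0 (Conj p q)"
| "delta0 p \<Longrightarrow> delta0 q \<Longrightarrow> delta0 (Disj p q)"
| "delta0 p \<Longrightarrow> delta0 q \<Longrightarrow> delta0 (Imp p q)"
| "delta0 p \<Longrightarrow> delta0 (BEx t p)"
| "delta0 p \<Longrightarrow> delta0 (BAll t p)"

inductive sigma :: "nat \<Rightarrow> fm \<Rightarrow> bool" and pi :: "nat \<Rightarrow> fm \<Rightarrow> bool" where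
  "delta0 p \<Longrightarrow> sigma n p"
| "delta0 p \<Longrightarrow> pi n p"
| "pi n p \<Longrightarrow> sigma (Suc n) p"
| "sigma n p \<Longrightarrow> pi (Suc n) p"
| "sigma (Suc n) p \<Longrightarrow> sigma (Suc n) (Ex p)"
| "pi (Suc n) p \<Longrightarrow> pi (Suc n) (All p)"

text \<open>PA^- : nonnegative parts of discretely ordered commutative rings (Kaye's axioms).\<close>
definition PAminus :: "'a str \<Rightarrow> bool" where
  "PAminus M \<longleftrightarrow>
    (\<forall>x y z. pls M (pls M x y) z = pls M x (pls M y z)) \<and>
    (\<forall>x y. pls M x y = pls M y x) \<and>
    (\<forall>x y z. tms M (tms M x y) z = tms M x (tms M y z)) \<and>
    (\<forall>x y. tms M x y = tms M y x) \<and>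
    (\<forall>x y z. tms M x (pls M y z) = pls M (tms M x y) (tms M x z)) \<and>
    (\<forall>x. pls M x (zer M) = x \<and> tms M x (zer M) = zer M) \<and>
    (\<forall>x. tms M x (one M) = x) \<and>
    (\<forall>x y z. lss M x y \<and> lss M y z \<longrightarrow> lss M x z) \<and>
    (\<forall>x. \<not> lss M x x) \<and>
    (\<forall>x y. lss M x y \<or> x = y \<or> lss M y x) \<and>
    (\<forall>x y z. lss M x y \<longrightarrow> lss M (pls M x z) (pls M y z)) \<and>
    (\<forall>x y z. lss M (zer M) z \<and> lss M x y \<longrightarrow> lss M (tms M x z) (tms M y z)) \<and>
    (\<forall>x y. lss M x y \<longrightarrow> (\<exists>z. pls M x z = y)) \<and>
    lss M (zer M) (one M) \<and>
    (\<forall>x. lss M (zer M) x \<longrightarrow> (lss M (one M) x \<or> one M = x)) \<and>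
    (\<forall>x. lss M (zer M) x \<or> zer M = x)"

text \<open>The induction axiom (universal closure) for phi(x, params), x = index 0.\<close>
definition ind_inst :: "'a str \<Rightarrow> fm \<Rightarrow> bool" where
  "ind_inst M p \<longleftrightarrow> (\<forall>e.
     (sat M (case_nat (zer M) e) p \<and>
      (\<forall>a. sat M (case_nat a e) p \<longrightarrow> sat M (case_nat (pls M a (one M)) e) p))
     \<longrightarrow> (\<forall>a. sat M (case_nat a e) p))"

definition IDelta0 :: "'a str \<Rightarrow> bool" where
  "IDelta0 M \<longleftrightarrow> PAminus M \<and> (\<forall>p. delta0 p \<longrightarrow> ind_inst M p)"

definition ISigma :: "nat \<Rightarrow> 'a str \<Rightarrow> bool" where
  "ISigma k M \<longleftrightarrow> PAminus M \<and> (\<forall>p. sigma k p \<longrightarrow> ind_inst M p)"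

text \<open>WR phi for phi(x,y, params): y = index 0, x = index 1; a, b fresh.
  forall a. (forall x. exists y<a. phi) --> exists y<a. forall b. exists x>b. phi\<close>
definition WR_inst :: "'a str \<Rightarrow> fm \<Rightarrow> bool" where
  "WR_inst M p \<longleftrightarrow> (\<forall>e a.
     (\<forall>x. \<exists>y. lss M y a \<and> sat M (case_nat y (case_nat x e)) p)
     \<longrightarrow> (\<exists>y. lss M y a \<and> (\<forall>b. \<exists>x. lss M b x \<and> sat M (case_nat y (case_nat x e)) p)))"

definition WR_SigmaPi :: "nat \<Rightarrow> 'a str \<Rightarrow> bool" where
  "WR_SigmaPi n M \<longleftrightarrow> IDelta0 M \<and>
     (\<forall>p q. sigma n p \<and> pi n q \<longrightarrow> WR_inst M (Conj p q))"

end

theory Submission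
  imports Defs
begin

(* By induction on m \<le> n, \<Sigma>\<^sub>m and \<Pi>\<^sub>m satisfy induction and are closed, up to equivalence
   in M, under bounded universal quantification. The engine is the \<Pi>\<^sub>m approximation of a
   \<Sigma>\<^sub>m\<^sub>+\<^sub>1 property \<exists>w. \<theta>(w) by the bounded searches \<exists>w<x. \<theta>(w). For collection, if
   \<forall>z<a. \<exists>w. \<theta>(z, w) holds but no single search bound x works for all z < a, then WR, applied
   to the \<Sigma>\<^sub>m property "the search up to x fails at z", yields one z < a at which the
   searches fail for unboundedly many x, although they succeed for all large x.
   For induction, if \<psi>(0) holds and \<psi>(c) fails, then for each x the approximation of \<psi> by
   the searches up to x drops somewhere below c, by \<Pi>\<^sub>m induction; WR yields one y < c
   at which it drops for unboundedly many x, whence \<psi>(y) holds and \<psi>(y + 1) fails.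
   \<Pi>\<^sub>m\<^sub>+\<^sub>1 induction is dual, using \<Sigma>\<^sub>m induction. *)

fun subst_trm :: "(nat \<Rightarrow> trm) \<Rightarrow> trm \<Rightarrow> trm" where
  "subst_trm s (Var i) = s i"
| "subst_trm s Zero = Zero"
| "subst_trm s One = One"
| "subst_trm s (Plus a b) = Plus (subst_trm s a) (subst_trm s b)"
| "subst_trm s (Times a b) = Times (subst_trm s a) (subst_trm s b)"

lemma evt_subst_trm: "evt M e (subst_trm s t) = evt M (\<lambda>i. evt M e (s i)) t"
  by (induction t) auto

definition lift_subst :: "(nat \<Rightarrow> trm) \<Rightarrow> nat \<Rightarrow> trm" where
  "lift_subst s = case_nat (Var 0) (\<lambda>i. subst_trm (Var \<circ> Suc) (s i))"

fun subst_fm :: "(nat \<Rightarrow> trm) \<Rightarrow> fm \<Rightarrow> fm" where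
  "subst_fm s (Eq a b) = Eq (subst_trm s a) (subst_trm s b)"
| "subst_fm s (Lt a b) = Lt (subst_trm s a) (subst_trm s b)"
| "subst_fm s (Neg p) = Neg (subst_fm s p)"
| "subst_fm s (Conj p q) = Conj (subst_fm s p) (subst_fm s q)"
| "subst_fm s (Disj p q) = Disj (subst_fm s p) (subst_fm s q)"
| "subst_fm s (Imp p q) = Imp (subst_fm s p) (subst_fm s q)"
| "subst_fm s (Ex p) = Ex (subst_fm (lift_subst s) p)"
| "subst_fm s (All p) = All (subst_fm (lift_subst s) p)"
| "subst_fm s (BEx t p) = BEx (subst_trm s t) (subst_fm (lift_subst s) p)"
| "subst_fm s (BAll t p) = BAll (subst_trm s t) (subst_fm (lift_subst s) p)"

lemma evt_lift_subst:
  "(\<lambda>i. evt M (case_nat a e) (lift_subst s i)) = case_nat a (\<lambda>i. evt M e (s i))"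
  by (rule ext, simp add: lift_subst_def evt_subst_trm split: nat.split)

lemma sat_subst_fm: "sat M e (subst_fm s p) = sat M (\<lambda>i. evt M e (s i)) p"
  by (induction p arbitrary: e s) (auto simp: evt_subst_trm evt_lift_subst)

lemma delta0_subst_fm: "delta0 p \<Longrightarrow> delta0 (subst_fm s p)"
  by (induction p arbitrary: s rule: delta0.induct) (auto intro: delta0.intros)

lemma sigma_pi_subst_fm:
  "sigma n p \<Longrightarrow> sigma n (subst_fm s p)"
  "pi n p \<Longrightarrow> pi n (subst_fm s p)"
  by (induction n p and n p arbitrary: s and s rule: sigma_pi.inducts)
     (auto intro: sigma_pi.intros delta0_subst_fm)

fun negate :: "fm \<Rightarrow> fm" where
  "negate (Ex p) = All (negate p)"
| "negate (All p) = Ex (negate p)"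
| "negate p = Neg p"

lemma sat_negate: "sat M e (negate p) = (\<not> sat M e p)"
  by (induction p arbitrary: e rule: negate.induct) auto

lemma sigma_pi_negate:
  "sigma n p \<Longrightarrow> pi n (negate p)"
  "pi n p \<Longrightarrow> sigma n (negate p)"
proof (induction n p and n p rule: sigma_pi.inducts)
  case (1 p n)
  then show ?case by (cases rule: delta0.cases) (auto intro: sigma_pi.intros delta0.intros)
next
  case (2 p n)
  then show ?case by (cases rule: delta0.cases) (auto intro: sigma_pi.intros delta0.intros)
qed (auto intro: sigma_pi.intros)

fun disj_matrix :: "fm \<Rightarrow> fm \<Rightarrow> fm" where
  "disj_matrix (Ex p) d = Ex (disj_matrix p (subst_fm (Var \<circ> Suc) d))"
| "disj_matrix (All p) d = All (disj_matrix p (subst_fm (Var \<circ> Suc) d))"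
| "disj_matrix p d = Disj p d"

lemma sat_disj_matrix: "sat M e (disj_matrix p d) = (sat M e p \<or> sat M e d)"
  by (induction p d arbitrary: e rule: disj_matrix.induct) (auto simp: sat_subst_fm)

lemma sigma_pi_disj_matrix:
  "sigma n p \<Longrightarrow> delta0 d \<Longrightarrow> sigma n (disj_matrix p d)"
  "pi n p \<Longrightarrow> delta0 d \<Longrightarrow> pi n (disj_matrix p d)"
proof (induction n p and n p arbitrary: d and d rule: sigma_pi.inducts)
  case (1 p n)
  then show ?case by (cases rule: delta0.cases) (auto intro: sigma_pi.intros delta0.intros)
next
  case (2 p n)
  then show ?case by (cases rule: delta0.cases) (auto intro: sigma_pi.intros delta0.intros)
qed (auto intro: sigma_pi.intros delta0_subst_fm)

lemma sigma_pi_Suc: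
  "sigma n p \<Longrightarrow> sigma (Suc n) p"
  "pi n p \<Longrightarrow> pi (Suc n) p"
  by (induction n p and n p rule: sigma_pi.inducts) (auto intro: sigma_pi.intros)

lemma sigma_pi_mono:
  assumes "m \<le> n"
  shows "sigma m p \<Longrightarrow> sigma n p" and "pi m p \<Longrightarrow> pi n p"
  using assms by (induction n) (auto simp: le_Suc_eq intro: sigma_pi_Suc)

lemma sigma_0_iff: "sigma 0 p \<longleftrightarrow> delta0 p"
  by (auto elim: sigma.cases intro: sigma_pi.intros)

lemma pi_0_iff: "pi 0 p \<longleftrightarrow> delta0 p"
  by (auto elim: pi.cases intro: sigma_pi.intros)

lemma sigma_Suc_induct [consumes 1, case_names pi Ex]:
  assumes "sigma (Suc m) p"
    and "\<And>p. pi m p \<Longrightarrow> P p"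
    and "\<And>p. sigma (Suc m) p \<Longrightarrow> P p \<Longrightarrow> P (Ex p)"
  shows "P p"
proof -
  have "sigma k q \<Longrightarrow> k = Suc m \<longrightarrow> P q" for k q
    by (induction k q rule: sigma_pi.inducts(1)[of _ _ _ "\<lambda>_ _. True"])
       (auto intro: assms(2,3) sigma_pi.intros)
  with assms(1) show ?thesis
    by blast
qed

context
  fixes M :: "'a str"
  assumes PA: "PAminus M"
begin

lemma PAminus_strict_linear_order:
  "(\<forall>x y z. lss M x y \<and> lss M y z \<longrightarrow> lss M x z) \<and> (\<forall>x. \<not> lss M x x) \<and>
   (\<forall>x y. lss M x y \<or> x = y \<or> lss M y x)"
  using PA unfolding PAminus_def by (elim conjE) (intro conjI; assumption)

lemma PAminus_less_trans: "lss M x y \<Longrightarrow> lss M y z \<Longrightarrow> lss M x z"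
  using PAminus_strict_linear_order by blast

lemma PAminus_less_irrefl: "\<not> lss M x x"
  using PAminus_strict_linear_order by blast

lemma PAminus_linear: "lss M x y \<or> x = y \<or> lss M y x"
  using PAminus_strict_linear_order by blast

lemma PAminus_less_succ: "lss M x (pls M x (one M))"
proof -
  have "(\<forall>x y z. lss M x y \<longrightarrow> lss M (pls M x z) (pls M y z)) \<and> lss M (zer M) (one M) \<and>
        (\<forall>x y. pls M x y = pls M y x) \<and> (\<forall>x. pls M x (zer M) = x \<and> tms M x (zer M) = zer M)"
    using PA unfolding PAminus_def by (elim conjE) (intro conjI; assumption)
  then have "lss M (pls M (zer M) x) (pls M (one M) x)" and "pls M (zer M) x = x"
    and "pls M (one M) x = pls M x (one M)" by metis+
  then show ?thesis by simp
qed

end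

definition definable :: "(fm \<Rightarrow> bool) \<Rightarrow> 'a str \<Rightarrow> ((nat \<Rightarrow> 'a) \<Rightarrow> bool) \<Rightarrow> bool" where
  "definable C M P \<longleftrightarrow> (\<exists>p. C p \<and> (\<forall>e. sat M e p = P e))"

lemma definable_sat: "C p \<Longrightarrow> definable C M (\<lambda>e. sat M e p)"
  unfolding definable_def by blast

lemma definable_subst:
  assumes "\<And>p. C p \<Longrightarrow> C (subst_fm s p)" and "definable C M P"
  shows "definable C M (\<lambda>e. P (\<lambda>i. evt M e (s i)))"
  using assms unfolding definable_def by (metis sat_subst_fm)

lemma definable_rename:
  assumes "\<And>p. C p \<Longrightarrow> C (subst_fm (Var \<circ> f) p)" and "definable C M P"
  shows "definable C M (\<lambda>e. P (\<lambda>i. e (f i)))"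
  using definable_subst[OF assms] by simp

lemma definable_neg:
  "definable (sigma n) M P \<Longrightarrow> definable (pi n) M (\<lambda>e. \<not> P e)"
  "definable (pi n) M P \<Longrightarrow> definable (sigma n) M (\<lambda>e. \<not> P e)"
  unfolding definable_def by (metis sat_negate sigma_pi_negate)+

lemma definable_disj_delta0:
  "definable (sigma n) M P \<Longrightarrow> definable delta0 M D \<Longrightarrow> definable (sigma n) M (\<lambda>e. P e \<or> D e)"
  "definable (pi n) M P \<Longrightarrow> definable delta0 M D \<Longrightarrow> definable (pi n) M (\<lambda>e. P e \<or> D e)"
  unfolding definable_def by (metis sat_disj_matrix sigma_pi_disj_matrix)+

lemma definable_Ex: "definable (pi m) M P \<Longrightarrow> definable (sigma (Suc m)) M (\<lambda>e. \<exists>a. P (case_nat a e))"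
  unfolding definable_def by (metis sat.simps(7) sigma_pi.intros(3,5))

lemma definable_All: "definable (sigma m) M P \<Longrightarrow> definable (pi (Suc m)) M (\<lambda>e. \<forall>a. P (case_nat a e))"
  unfolding definable_def by (metis sat.simps(8) sigma_pi.intros(4,6))

lemma definable_BAll_delta0:
  "definable delta0 M P \<Longrightarrow> definable delta0 M (\<lambda>e. \<forall>z. lss M z (e j) \<longrightarrow> P (case_nat z e))"
  unfolding definable_def by (metis sat.simps(10) evt.simps(1) delta0.intros(8))

lemma definable_cong: "definable C M P \<Longrightarrow> (\<And>e. P e \<longleftrightarrow> P' e) \<Longrightarrow> definable C M P'"
  unfolding definable_def by simp

definition swap01 :: "(nat \<Rightarrow> 'a) \<Rightarrow> nat \<Rightarrow> 'a" where
  "swap01 e = case_nat (e 1) (case_nat (e 0) (\<lambda>i. e (Suc (Suc i))))"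

lemma swap01_case_nat [simp]: "swap01 (case_nat a (case_nat b e)) = case_nat b (case_nat a e)"
  unfolding swap01_def by (simp add: fun_eq_iff split: nat.split)

lemma definable_swap01:
  assumes "\<And>s p. C p \<Longrightarrow> C (subst_fm s p)" and "definable C M P"
  shows "definable C M (\<lambda>e. P (swap01 e))"
proof -
  define f :: "nat \<Rightarrow> nat" where "f = case_nat 1 (case_nat 0 (\<lambda>i. Suc (Suc i)))"
  have "(\<lambda>i. e (f i)) = swap01 e" for e :: "nat \<Rightarrow> 'a"
    unfolding swap01_def f_def by (simp add: fun_eq_iff split: nat.split)
  then show ?thesis
    using definable_rename[OF assms, of f] by simp
qed

lemma definable_succ:
  assumes "\<And>s p. C p \<Longrightarrow> C (subst_fm s p)" and "definable C M P"
  shows "definable C M (\<lambda>e. P (case_nat (pls M (e 0) (one M)) (\<lambda>i. e (Suc i))))"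
proof -
  define s where "s = case_nat (Plus (Var 0) One) (\<lambda>i. Var (Suc i))"
  have "(\<lambda>i. evt M e (s i)) = case_nat (pls M (e 0) (one M)) (\<lambda>i. e (Suc i))" for e
    unfolding s_def by (simp add: fun_eq_iff split: nat.split)
  then show ?thesis
    using definable_subst[OF assms, of s] by simp
qed

definition unbounded :: "'a str \<Rightarrow> ('a \<Rightarrow> bool) \<Rightarrow> bool" where
  "unbounded M A \<longleftrightarrow> (\<forall>b. \<exists>x. lss M b x \<and> A x)"

definition all_large :: "'a str \<Rightarrow> ('a \<Rightarrow> bool) \<Rightarrow> bool" where
  "all_large M A \<longleftrightarrow> (\<exists>b. \<forall>x. lss M b x \<longrightarrow> A x)"

lemma all_large_conj:
  assumes PA: "PAminus M" and "all_large M A" and "all_large M B"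
  shows "all_large M (\<lambda>x. A x \<and> B x)"
proof -
  obtain a b where a: "\<And>x. lss M a x \<Longrightarrow> A x" and b: "\<And>x. lss M b x \<Longrightarrow> B x"
    using assms(2,3) unfolding all_large_def by blast
  consider "lss M a b" | "a = b" | "lss M b a"
    using PAminus_linear[OF PA] by blast
  then show ?thesis
    unfolding all_large_def by cases (use a b PAminus_less_trans[OF PA] in blast)+
qed

lemma all_large_ex:
  assumes PA: "PAminus M" and "all_large M A"
  shows "\<exists>x. A x"
  using assms(2) PAminus_less_succ[OF PA] unfolding all_large_def by blast

lemma unbounded_all_large_ex:
  "unbounded M A \<Longrightarrow> all_large M B \<Longrightarrow> \<exists>x. A x \<and> B x"
  unfolding unbounded_def all_large_def by blast

definition induction_holds :: "'a str \<Rightarrow> ('a \<Rightarrow> bool) \<Rightarrow> bool" where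
  "induction_holds M A \<longleftrightarrow> A (zer M) \<and> (\<forall>a. A a \<longrightarrow> A (pls M a (one M))) \<longrightarrow> (\<forall>a. A a)"

definition induction_scheme :: "(fm \<Rightarrow> bool) \<Rightarrow> 'a str \<Rightarrow> bool" where
  "induction_scheme C M \<longleftrightarrow> (\<forall>p. C p \<longrightarrow> ind_inst M p)"

lemma ind_inst_iff: "ind_inst M p \<longleftrightarrow> (\<forall>e. induction_holds M (\<lambda>a. sat M (case_nat a e) p))"
  unfolding ind_inst_def induction_holds_def ..

lemma induction_scheme_definable:
  assumes "induction_scheme C M" and "definable C M P"
  shows "induction_holds M (\<lambda>a. P (case_nat a e))"
proof -
  obtain p where "C p" and p: "\<And>e. sat M e p = P e"
    using assms(2) unfolding definable_def by blast
  then have "induction_holds M (\<lambda>a. sat M (case_nat a e) p)"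
    using assms(1) unfolding induction_scheme_def ind_inst_iff by blast
  then show ?thesis
    unfolding p .
qed

definition wr_holds :: "'a str \<Rightarrow> 'a \<Rightarrow> ('a \<Rightarrow> 'a \<Rightarrow> bool) \<Rightarrow> bool" where
  "wr_holds M a T \<longleftrightarrow>
     (\<forall>x. \<exists>y. lss M y a \<and> T x y) \<longrightarrow> (\<exists>y. lss M y a \<and> unbounded M (\<lambda>x. T x y))"

definition WR_schema :: "nat \<Rightarrow> 'a str \<Rightarrow> bool" where
  "WR_schema n M \<longleftrightarrow> (\<forall>p q. sigma n p \<and> pi n q \<longrightarrow> WR_inst M (Conj p q))"

lemma WR_schema_mono: "WR_schema n M \<Longrightarrow> m \<le> n \<Longrightarrow> WR_schema m M"
  unfolding WR_schema_def by (meson sigma_pi_mono)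

lemma wr_holds_definable:
  assumes "WR_schema n M" and "definable (sigma n) M P" and "definable (pi n) M Q"
  shows "wr_holds M a (\<lambda>x y. P (case_nat y (case_nat x e)) \<and> Q (case_nat y (case_nat x e)))"
proof -
  obtain p q where "sigma n p" "pi n q" and pq: "\<And>e. sat M e (Conj p q) = (P e \<and> Q e)"
    using assms(2,3) unfolding definable_def by force
  then have "WR_inst M (Conj p q)"
    using assms(1) unfolding WR_schema_def by blast
  then show ?thesis
    unfolding WR_inst_def wr_holds_def unbounded_def pq by blast
qed

section \<open>Collection\<close>

definition bounded_all_closed :: "(fm \<Rightarrow> bool) \<Rightarrow> 'a str \<Rightarrow> bool" where
  "bounded_all_closed C M \<longleftrightarrow> (\<forall>P j. definable C M P \<longrightarrow>
     definable C M (\<lambda>e. \<forall>z. lss M z (e j) \<longrightarrow> P (case_nat z e)))"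

lemma definable_bounded_all:
  "bounded_all_closed C M \<Longrightarrow> definable C M P \<Longrightarrow>
   definable C M (\<lambda>e. \<forall>z. lss M z (e j) \<longrightarrow> P (case_nat z e))"
  unfolding bounded_all_closed_def by blast

lemma definable_bounded_ex:
  assumes "bounded_all_closed (sigma m) M" and "definable (pi m) M P"
  shows "definable (pi m) M (\<lambda>e. \<exists>z. lss M z (e j) \<and> P (case_nat z e))"
  using definable_neg(1)[OF definable_bounded_all[OF assms(1) definable_neg(2)[OF assms(2)]]]
  by simp

lemma bounded_all_closed_0: "bounded_all_closed (sigma 0) M" "bounded_all_closed (pi 0) M"
  unfolding bounded_all_closed_def sigma_0_iff pi_0_iff by (simp_all add: definable_BAll_delta0)

text \<open>If P e is (\<exists>w. \<theta> w e), the bounded search Q (case_nat x e) = (\<exists>w<x. \<theta> w e) approximates P: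
  P e holds iff the search succeeds for some x, iff it succeeds for all large x.\<close>

definition approximates :: "'a str \<Rightarrow> ((nat \<Rightarrow> 'a) \<Rightarrow> bool) \<Rightarrow> ((nat \<Rightarrow> 'a) \<Rightarrow> bool) \<Rightarrow> bool" where
  "approximates M Q P \<longleftrightarrow>
     (\<forall>x e. Q (case_nat x e) \<longrightarrow> P e) \<and> (\<forall>e. P e \<longrightarrow> all_large M (\<lambda>x. Q (case_nat x e)))"

lemma sigma_Suc_approximation:
  assumes PA: "PAminus M" and BA: "bounded_all_closed (sigma m) M"
    and "definable (sigma (Suc m)) M P"
  shows "\<exists>Q. definable (pi m) M Q \<and> approximates M Q P"
proof -
  have base: "\<exists>Q. definable (pi m) M Q \<and> approximates M Q (\<lambda>e. sat M e p)" if "pi m p" for p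
  proof (intro exI conjI)
    show "definable (pi m) M (\<lambda>e. sat M (\<lambda>i. e (Suc i)) p)"
      using definable_rename[OF sigma_pi_subst_fm(2) definable_sat[of "pi m", OF that]] .
    show "approximates M (\<lambda>e. sat M (\<lambda>i. e (Suc i)) p) (\<lambda>e. sat M e p)"
      unfolding approximates_def all_large_def by simp
  qed
  have "\<exists>Q. definable (pi m) M Q \<and> approximates M Q (\<lambda>e. sat M e p)" if "sigma (Suc m) p" for p
    using that
  proof (induction rule: sigma_Suc_induct)
    case (pi p)
    then show ?case by (rule base)
  next
    case (Ex p)
    then obtain Q where Q: "definable (pi m) M Q" and approx: "approximates M Q (\<lambda>e. sat M e p)"
      by blast
    let ?Q' = "\<lambda>e. \<exists>z. lss M z (e 0) \<and> Q (swap01 (case_nat z e))"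
    have "definable (pi m) M ?Q'"
      using definable_bounded_ex[OF BA definable_swap01[OF sigma_pi_subst_fm(2) Q]] .
    moreover have "approximates M ?Q' (\<lambda>e. sat M e (Ex p))"
      unfolding approximates_def
    proof (intro conjI allI impI)
      fix x e assume "?Q' (case_nat x e)"
      then show "sat M e (Ex p)"
        using approx unfolding approximates_def by auto
    next
      fix e assume "sat M e (Ex p)"
      then obtain z where "sat M (case_nat z e) p" by auto
      then have "all_large M (\<lambda>x. Q (case_nat x (case_nat z e)))"
        using approx unfolding approximates_def by blast
      moreover have "all_large M (\<lambda>x. lss M z x)"
        unfolding all_large_def by blast
      ultimately have "all_large M (\<lambda>x. lss M z x \<and> Q (case_nat x (case_nat z e)))"
        using all_large_conj[OF PA] by blast
      then show "all_large M (\<lambda>x. ?Q' (case_nat x e))"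
        unfolding all_large_def by auto
    qed
    ultimately show ?case by blast
  qed
  moreover obtain p where "sigma (Suc m) p" and "(\<lambda>e. sat M e p) = P"
    using assms(3) unfolding definable_def by fast
  ultimately show ?thesis
    by blast
qed

lemma bounded_all_closed_pi_Suc:
  assumes PA: "PAminus M" and BA: "bounded_all_closed (sigma m) M"
  shows "bounded_all_closed (pi (Suc m)) M"
  unfolding bounded_all_closed_def
proof (intro allI impI)
  fix P j assume "definable (pi (Suc m)) M P"
  then obtain Q where Q: "definable (pi m) M Q" and approx: "approximates M Q (\<lambda>e. \<not> P e)"
    using sigma_Suc_approximation[OF PA BA definable_neg(2)] by blast
  have P_iff: "P e \<longleftrightarrow> (\<forall>x. \<not> Q (case_nat x e))" for e
    using approx all_large_ex[OF PA] unfolding approximates_def by blast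
  have "definable (pi (Suc m)) M (\<lambda>e. \<forall>x z. lss M z (e j) \<longrightarrow> \<not> Q (case_nat x (case_nat z e)))"
    using definable_All[OF definable_bounded_all[OF BA definable_swap01[OF sigma_pi_subst_fm(1)
          definable_neg(2)[OF Q]], of "Suc j"]] by simp
  then show "definable (pi (Suc m)) M (\<lambda>e. \<forall>z. lss M z (e j) \<longrightarrow> P (case_nat z e))"
    by (rule definable_cong) (auto simp: P_iff)
qed

lemma bounded_all_closed_sigma_Suc:
  assumes PA: "PAminus M" and WR: "WR_schema m M"
    and BAs: "bounded_all_closed (sigma m) M" and BAp: "bounded_all_closed (pi m) M"
  shows "bounded_all_closed (sigma (Suc m)) M"
  unfolding bounded_all_closed_def
proof (intro allI impI)
  fix P j assume "definable (sigma (Suc m)) M P"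
  then obtain Q where Q: "definable (pi m) M Q" and approx: "approximates M Q P"
    using sigma_Suc_approximation[OF PA BAs] by blast
  have "definable (sigma (Suc m)) M
          (\<lambda>e. \<exists>b. \<forall>z. lss M z (e j) \<longrightarrow> Q (case_nat b (case_nat z e)))"
    using definable_Ex[OF definable_bounded_all[OF BAp definable_swap01[OF sigma_pi_subst_fm(2) Q],
          of "Suc j"]] by simp
  moreover have "(\<exists>b. \<forall>z. lss M z (e j) \<longrightarrow> Q (case_nat b (case_nat z e))) \<longleftrightarrow>
                 (\<forall>z. lss M z (e j) \<longrightarrow> P (case_nat z e))" for e
  proof
    assume "\<exists>b. \<forall>z. lss M z (e j) \<longrightarrow> Q (case_nat b (case_nat z e))"
    then show "\<forall>z. lss M z (e j) \<longrightarrow> P (case_nat z e)"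
      using approx unfolding approximates_def by blast
  next
    assume all_P: "\<forall>z. lss M z (e j) \<longrightarrow> P (case_nat z e)"
    show "\<exists>b. \<forall>z. lss M z (e j) \<longrightarrow> Q (case_nat b (case_nat z e))"
    proof (rule ccontr)
      assume "\<not> ?thesis"
      then have "\<forall>x. \<exists>y. lss M y (e j) \<and> \<not> Q (swap01 (case_nat y (case_nat x e))) \<and> True"
        by simp
      moreover have "definable (pi m) M (\<lambda>_. True)"
        using definable_sat[of "pi m" "Eq Zero Zero"] by (simp add: sigma_pi.intros delta0.intros)
      ultimately obtain y where "lss M y (e j)"
        and "unbounded M (\<lambda>x. \<not> Q (swap01 (case_nat y (case_nat x e))) \<and> True)"
        using wr_holds_definable[OF WR definable_neg(2)[OF definable_swap01[OF sigma_pi_subst_fm(2) Q]]]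
        unfolding wr_holds_def by blast
      moreover have "all_large M (\<lambda>x. Q (case_nat x (case_nat y e)))"
        using all_P \<open>lss M y (e j)\<close> approx unfolding approximates_def by blast
      ultimately show False
        using unbounded_all_large_ex by fastforce
    qed
  qed
  ultimately show "definable (sigma (Suc m)) M (\<lambda>e. \<forall>z. lss M z (e j) \<longrightarrow> P (case_nat z e))"
    by (rule definable_cong)
qed

section \<open>Induction\<close>

lemma wr_uniform_drop:
  assumes PA: "PAminus M"
    and ind: "\<And>x. induction_holds M (\<lambda>u. R x u \<or> lss M c u)"
    and R0: "\<And>x. R x (zer M)" and Rc: "\<And>x. \<not> R x c"
    and wr: "wr_holds M c (\<lambda>x y. R x y \<and> \<not> R x (pls M y (one M)))"
  shows "\<exists>y. lss M y c \<and> unbounded M (\<lambda>x. R x y \<and> \<not> R x (pls M y (one M)))"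
proof -
  have "\<exists>y. lss M y c \<and> R x y \<and> \<not> R x (pls M y (one M))" for x
  proof (rule ccontr)
    assume no_drop: "\<not> ?thesis"
    have "R x a \<or> lss M c a \<Longrightarrow> R x (pls M a (one M)) \<or> lss M c (pls M a (one M))" for a
      using no_drop Rc PAminus_linear[OF PA, of a c]
        PAminus_less_trans[OF PA _ PAminus_less_succ[OF PA]] by blast
    then have "R x c \<or> lss M c c"
      using ind[of x] R0 unfolding induction_holds_def by blast
    then show False
      using Rc PAminus_less_irrefl[OF PA] by blast
  qed
  then show ?thesis
    using wr unfolding wr_holds_def by blast
qed

lemma sigma_Suc_ex_drop:
  assumes PA: "PAminus M" and WR: "WR_schema n M" and IP: "induction_scheme (pi n) M"
    and BA: "bounded_all_closed (sigma n) M" and P: "definable (sigma (Suc n)) M P"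
    and P0: "P (case_nat (zer M) e)" and Pc: "\<not> P (case_nat c e)"
  shows "\<exists>y. lss M y c \<and> P (case_nat y e) \<and> \<not> P (case_nat (pls M y (one M)) e)"
proof -
  \<comment> \<open>A dummy variable at index 1 makes room for c in the environments of the formulas below.\<close>
  have "definable (sigma (Suc n)) M (\<lambda>E. P (case_nat (E 0) (\<lambda>i. E (Suc (Suc i)))))"
    using definable_rename[OF sigma_pi_subst_fm(1) P, of "case_nat 0 (\<lambda>i. Suc (Suc i))"]
    by (simp add: nat.case_distrib)
  then obtain Q where Q: "definable (pi n) M Q"
    and approx: "approximates M Q (\<lambda>E. P (case_nat (E 0) (\<lambda>i. E (Suc (Suc i)))))"
    using sigma_Suc_approximation[OF PA BA] by blast
  define R where "R x y \<longleftrightarrow> Q (case_nat x (case_nat y (case_nat c e))) \<or> y = zer M" for x y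
  define RE where "RE E \<longleftrightarrow> Q (swap01 E) \<or> E 0 = zer M" for E
  have RE_R: "RE (case_nat y (case_nat x (case_nat c e))) = R x y" for x y
    unfolding RE_def R_def by simp
  have RE: "definable (pi n) M RE"
    unfolding RE_def
    using definable_disj_delta0(2)[OF definable_swap01[OF sigma_pi_subst_fm(2) Q]
        definable_sat[of delta0 "Eq (Var 0) Zero"]]
    by (simp add: delta0.intros)
  have ind: "induction_holds M (\<lambda>u. R x u \<or> lss M c u)" for x
    using induction_scheme_definable[OF IP definable_disj_delta0(2)[OF RE
        definable_sat[of delta0 "Lt (Var 2) (Var 0)"]], of "case_nat x (case_nat c e)"]
    by (simp add: delta0.intros RE_R)
  have wr: "wr_holds M c (\<lambda>x y. R x y \<and> \<not> R x (pls M y (one M)))"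
    using wr_holds_definable[OF WR definable_neg(2)[OF definable_succ[OF sigma_pi_subst_fm(2) RE]] RE,
        of c "case_nat c e"]
    by (simp add: RE_R conj_commute)
  have R0: "R x (zer M)" for x
    unfolding R_def by simp
  have "c \<noteq> zer M"
    using P0 Pc by blast
  then have Rc: "\<not> R x c" for x
    using approx Pc unfolding R_def approximates_def by force
  obtain y where "lss M y c" and y: "unbounded M (\<lambda>x. R x y \<and> \<not> R x (pls M y (one M)))"
    using wr_uniform_drop[OF PA ind R0 Rc wr] by blast
  moreover have "P (case_nat y e)"
    using y P0 approx unfolding unbounded_def R_def approximates_def by force
  moreover have "\<not> P (case_nat (pls M y (one M)) e)"
  proof
    assume "P (case_nat (pls M y (one M)) e)"
    then have "all_large M (\<lambda>x. R x (pls M y (one M)))"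
      using approx unfolding approximates_def all_large_def R_def by force
    then show False
      using y unbounded_all_large_ex by fastforce
  qed
  ultimately show ?thesis by blast
qed

lemma sigma_Suc_ex_rise:
  assumes PA: "PAminus M" and WR: "WR_schema n M" and IS: "induction_scheme (sigma n) M"
    and BA: "bounded_all_closed (sigma n) M" and P: "definable (sigma (Suc n)) M P"
    and P0: "\<not> P (case_nat (zer M) e)" and Pc: "P (case_nat c e)"
  shows "\<exists>y. lss M y c \<and> \<not> P (case_nat y e) \<and> P (case_nat (pls M y (one M)) e)"
proof -
  have "definable (sigma (Suc n)) M (\<lambda>E. P (case_nat (E 0) (\<lambda>i. E (Suc (Suc i)))))"
    using definable_rename[OF sigma_pi_subst_fm(1) P, of "case_nat 0 (\<lambda>i. Suc (Suc i))"]
    by (simp add: nat.case_distrib)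
  then obtain Q where Q: "definable (pi n) M Q"
    and approx: "approximates M Q (\<lambda>E. P (case_nat (E 0) (\<lambda>i. E (Suc (Suc i)))))"
    using sigma_Suc_approximation[OF PA BA] by blast
  define R where "R x y \<longleftrightarrow> \<not> (Q (case_nat x (case_nat y (case_nat c e))) \<or> y = c)" for x y
  define RE where "RE E \<longleftrightarrow> \<not> (Q (swap01 E) \<or> E 0 = E 2)" for E
  have RE_R: "RE (case_nat y (case_nat x (case_nat c e))) = R x y" for x y
    unfolding RE_def R_def by (simp add: numeral_2_eq_2)
  have RE: "definable (sigma n) M RE"
    unfolding RE_def
    using definable_neg(2)[OF definable_disj_delta0(2)[OF definable_swap01[OF sigma_pi_subst_fm(2) Q]
        definable_sat[of delta0 "Eq (Var 0) (Var 2)"]]]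
    by (simp add: delta0.intros)
  have ind: "induction_holds M (\<lambda>u. R x u \<or> lss M c u)" for x
    using induction_scheme_definable[OF IS definable_disj_delta0(1)[OF RE
        definable_sat[of delta0 "Lt (Var 2) (Var 0)"]], of "case_nat x (case_nat c e)"]
    by (simp add: delta0.intros RE_R)
  have wr: "wr_holds M c (\<lambda>x y. R x y \<and> \<not> R x (pls M y (one M)))"
    using wr_holds_definable[OF WR RE definable_neg(1)[OF definable_succ[OF sigma_pi_subst_fm(1) RE]],
        of c "case_nat c e"]
    by (simp add: RE_R)
  have "c \<noteq> zer M"
    using P0 Pc by blast
  then have R0: "R x (zer M)" for x
    using approx P0 unfolding R_def approximates_def by force
  have Rc: "\<not> R x c" for x
    unfolding R_def by simp
  obtain y where "lss M y c" and y: "unbounded M (\<lambda>x. R x y \<and> \<not> R x (pls M y (one M)))"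
    using wr_uniform_drop[OF PA ind R0 Rc wr] by blast
  moreover have "\<not> P (case_nat y e)"
  proof
    assume "P (case_nat y e)"
    then have "all_large M (\<lambda>x. \<not> R x y)"
      using approx unfolding approximates_def all_large_def R_def by force
    then show False
      using y unbounded_all_large_ex by fastforce
  qed
  moreover have "P (case_nat (pls M y (one M)) e)"
    using y Pc approx unfolding unbounded_def R_def approximates_def by force
  ultimately show ?thesis by blast
qed

lemma induction_scheme_sigma_Suc:
  assumes PA: "PAminus M" and WR: "WR_schema n M" and IP: "induction_scheme (pi n) M"
    and BA: "bounded_all_closed (sigma n) M"
  shows "induction_scheme (sigma (Suc n)) M"
  unfolding induction_scheme_def ind_inst_iff induction_holds_def
proof (intro allI impI)
  fix p e c
  assume "sigma (Suc n) p"
    and "sat M (case_nat (zer M) e) p \<and>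
      (\<forall>a. sat M (case_nat a e) p \<longrightarrow> sat M (case_nat (pls M a (one M)) e) p)"
  then show "sat M (case_nat c e) p"
    using sigma_Suc_ex_drop[OF PA WR IP BA definable_sat, of _ e c] by blast
qed

lemma induction_scheme_pi_Suc:
  assumes PA: "PAminus M" and WR: "WR_schema n M" and IS: "induction_scheme (sigma n) M"
    and BA: "bounded_all_closed (sigma n) M"
  shows "induction_scheme (pi (Suc n)) M"
  unfolding induction_scheme_def ind_inst_iff induction_holds_def
proof (intro allI impI)
  fix p e c
  assume "pi (Suc n) p"
    and "sat M (case_nat (zer M) e) p \<and>
      (\<forall>a. sat M (case_nat a e) p \<longrightarrow> sat M (case_nat (pls M a (one M)) e) p)"
  then show "sat M (case_nat c e) p"
    using sigma_Suc_ex_rise[OF PA WR IS BA definable_neg(2)[OF definable_sat], of _ e c]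
    by blast
qed

lemma WR_schema_closure_induction:
  assumes PA: "PAminus M" and ID: "induction_scheme delta0 M" and WR: "WR_schema n M"
    and "m \<le> n"
  shows "bounded_all_closed (sigma m) M \<and> bounded_all_closed (pi m) M \<and>
         induction_scheme (sigma m) M \<and> induction_scheme (pi m) M"
  using \<open>m \<le> n\<close>
proof (induction m)
  case 0
  then show ?case
    using ID bounded_all_closed_0 unfolding induction_scheme_def sigma_0_iff pi_0_iff by blast
next
  case (Suc m)
  then have "WR_schema m M" and IH: "bounded_all_closed (sigma m) M" "bounded_all_closed (pi m) M"
    "induction_scheme (sigma m) M" "induction_scheme (pi m) M"
    using WR_schema_mono[OF WR] by auto
  then show ?case
    using bounded_all_closed_sigma_Suc[OF PA] bounded_all_closed_pi_Suc[OF PA]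
      induction_scheme_sigma_Suc[OF PA] induction_scheme_pi_Suc[OF PA] by blast
qed

theorem lemma5p5:
  fixes M :: "'a str" and n :: nat
  assumes "WR_SigmaPi n M"
  shows "ISigma (Suc n) M"
proof -
  have PA: "PAminus M" and ID: "induction_scheme delta0 M" and WR: "WR_schema n M"
    using assms unfolding WR_SigmaPi_def IDelta0_def induction_scheme_def WR_schema_def by auto
  then have "bounded_all_closed (sigma n) M" and "induction_scheme (pi n) M"
    using WR_schema_closure_induction[OF PA ID WR] by blast+
  then have "induction_scheme (sigma (Suc n)) M"
    using induction_scheme_sigma_Suc[OF PA WR] by blast
  then show ?thesis
    using PA unfolding ISigma_def induction_scheme_def by blast
qed

end
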